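(* Let $\mathcal{B}$ be a real uniform Banach space and $\Omega:\mathcal{B}\to\mathbb{R}$ admissible. Let $m\in\mathbb{N}$ and data $(x_i,y_i)_{i=1}^m\subset\mathcal{B}\times\mathbb{R}$ be such that the constraints $[f,x_i]=y_i$ ($i=1,\dots,m$) can be satisfied. Let $f_0\in\mathcal{B}$ be such that $f_0^*=\sum_{i=1}^m c_ix_i^*$ for some $c_1,\dots,c_m\in\mathbb{R}$. Then $f_0$ is a solution of the regularised interpolation problem $\min\{\Omega(f): f\in\mathcal{B},\ [f,x_i]=y_i\ \forall i\}$ if and only if $f_0$ is a solution of the minimal norm interpolation problem $\min\{\|f\|: f\in\mathcal{B},\ [f,x_i]=y_i\ \forall i\}$.
   Context: A real Banach space $\mathcal{B}$ is called uniform if it is uniformly convex and uniformly smooth (equivalently, its norm is uniformly Fréchet differentiable). On such a space there is a unique semi-inner product inducing the norm, i.e. a unique map $[\cdot,\cdot]:\mathcal{B}\times\mathcal{B}\to\mathbb{R}$ that is linear in the first argument, satisfies $[x,x]=\|x\|^2$, $|[x,y]|^2\le[x,x][y,y]$ and $[x,\lambda y]=\lambda[x,y]$ for $\lambda\in\mathbb{R}$; it is given by $[y,x]=\|x\|\lim_{t\to0}\frac{\|x+ty\|-\|x\|}{t}$ for $x\neq0$ (and $[y,0]=0$). The duality map $x\mapsto x^*$, $x^*(y)=[y,x]$, is a (nonlinear in general, but positively and negatively homogeneous) isometric bijection $\mathcal{B}\to\mathcal{B}^*$. Given $m\in\mathbb{N}$ and data $(x_i,y_i)\in\mathcal{B}\times\mathbb{R}$,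 $i=1,\dots,m$, the regularised interpolation problem is $\min\{\Omega(f): f\in\mathcal{B},\ [f,x_i]=y_i\ \forall i=1,\dots,m\}$. A function $\Omega:\mathcal{B}\to\mathbb{R}$ is called admissible if for every $m\in\mathbb{N}$ and every data $(x_i,y_i)_{i=1}^m\subset\mathcal{B}\times\mathbb{R}$ for which the constraints $[f,x_i]=y_i$ can be satisfied, the regularised interpolation problem has a minimiser $f_0$ whose dual element satisfies $f_0^*=\sum_{i=1}^m c_i x_i^*$ for some $c_i\in\mathbb{R}$. *)

theory Defs
  imports "HOL-Analysis.Analysis"
begin

definition uniformly_convex :: "'a::real_normed_vector itself \<Rightarrow> bool" where
  "uniformly_convex _ \<longleftrightarrow>
     (\<forall>\<epsilon>>0. \<exists>\<delta>>0. \<forall>x y::'a. norm x \<le> 1 \<and> norm y \<le> 1 \<and> norm (x - y) \<ge> \<epsilon>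
        \<longrightarrow> norm ((1/2) *\<^sub>R (x + y)) \<le> 1 - \<delta>)"

definition modulus_of_smoothness :: "'a::real_normed_vector itself \<Rightarrow> real \<Rightarrow> real" where
  "modulus_of_smoothness _ \<tau> =
     (SUP p \<in> {(x, y::'a). norm x = 1 \<and> norm y = \<tau>}.
        (norm (fst p + snd p) + norm (fst p - snd p)) / 2 - 1)"

definition uniformly_smooth :: "'a::real_normed_vector itself \<Rightarrow> bool" where
  "uniformly_smooth T \<longleftrightarrow>
     ((\<lambda>\<tau>. modulus_of_smoothness T \<tau> / \<tau>) \<longlongrightarrow> 0) (at_right 0)"

definition uniform_space :: "'a::banach itself \<Rightarrow> bool" where
  "uniform_space T \<longleftrightarrow> uniformly_convex T \<and> uniformly_smooth T"

definition sip :: "'a::real_normed_vector \<Rightarrow> 'a \<Rightarrow> real" where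
  "sip y x = (if x = 0 then 0
              else norm x * Lim (at (0::real)) (\<lambda>t. (norm (x + t *\<^sub>R y) - norm x) / t))"

text \<open>Constraints [f, x_i] = y_i for i < m (data indexed 0..m-1).\<close>
definition interpolates :: "nat \<Rightarrow> (nat \<Rightarrow> 'a::real_normed_vector) \<Rightarrow> (nat \<Rightarrow> real) \<Rightarrow> 'a \<Rightarrow> bool" where
  "interpolates m xs ys f \<longleftrightarrow> (\<forall>i<m. sip f (xs i) = ys i)"

definition is_interp_min :: "('a::real_normed_vector \<Rightarrow> real) \<Rightarrow> nat \<Rightarrow> (nat \<Rightarrow> 'a) \<Rightarrow> (nat \<Rightarrow> real) \<Rightarrow> 'a \<Rightarrow> bool" where
  "is_interp_min \<Omega> m xs ys f0 \<longleftrightarrow>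
     interpolates m xs ys f0 \<and> (\<forall>f. interpolates m xs ys f \<longrightarrow> \<Omega> f0 \<le> \<Omega> f)"

text \<open>f0^* = sum_i c_i x_i^*, as functionals y \<mapsto> [y, .].\<close>
definition dual_in_span :: "nat \<Rightarrow> (nat \<Rightarrow> 'a::real_normed_vector) \<Rightarrow> 'a \<Rightarrow> bool" where
  "dual_in_span m xs f0 \<longleftrightarrow>
     (\<exists>c::nat \<Rightarrow> real. \<forall>y. sip y f0 = (\<Sum>i<m. c i * sip y (xs i)))"

definition admissible :: "('a::real_normed_vector \<Rightarrow> real) \<Rightarrow> bool" where
  "admissible \<Omega> \<longleftrightarrow>
     (\<forall>m xs ys. m \<ge> 1 \<and> (\<exists>f. interpolates m xs ys f) \<longrightarrow>
        (\<exists>f0. is_interp_min \<Omega> m xs ys f0 \<and> dual_in_span m xs f0))"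

end

theory Submission
  imports Defs
begin

text \<open>
  Convexity of the norm gives \<open>|[y, x]| \<le> \<parallel>y\<parallel> \<parallel>x\<parallel>\<close>
  and \<open>[y, x] \<le> \<parallel>x\<parallel> (\<parallel>x + y\<parallel> - \<parallel>x\<parallel>)\<close>.
  If \<open>f\<^sub>0\<^sup>* = \<Sum> c\<^sub>i x\<^sub>i\<^sup>*\<close>, then \<open>[f, f\<^sub>0] = \<Sum> c\<^sub>i y\<^sub>i\<close> is the same for all interpolants \<open>f\<close>, in
  particular equal to \<open>[f\<^sub>0, f\<^sub>0] = \<parallel>f\<^sub>0\<parallel>\<^sup>2\<close>; hence \<open>\<parallel>f\<^sub>0\<parallel>\<^sup>2 \<le> \<parallel>f\<parallel> \<parallel>f\<^sub>0\<parallel>\<close> and \<open>f\<^sub>0\<close> has minimal norm.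
  Applied to the minimiser \<open>f\<^sub>1\<close> of \<open>\<Omega>\<close> provided by admissibility, the second inequality gives
  \<open>\<parallel>f\<^sub>0 + f\<^sub>1\<parallel> = 2 \<parallel>f\<^sub>0\<parallel> = 2 \<parallel>f\<^sub>1\<parallel>\<close> whenever \<open>f\<^sub>0\<close> also has minimal norm, and uniform convexity forces
  \<open>f\<^sub>0 = f\<^sub>1\<close>.
\<close>

definition norm_diffquot :: "'a::real_normed_vector \<Rightarrow> 'a \<Rightarrow> real \<Rightarrow> real" where
  "norm_diffquot x y t = (norm (x + t *\<^sub>R y) - norm x) / t"

lemma sip_eq_Lim_norm_diffquot:
  "sip y x = (if x = 0 then 0 else norm x * Lim (at 0) (norm_diffquot x y))"
  by (simp add: sip_def norm_diffquot_def[abs_def])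

lemma abs_norm_diffquot_le: "\<bar>norm_diffquot x y t\<bar> \<le> norm y"
proof (cases "t = 0")
  case True
  then show ?thesis by (simp add: norm_diffquot_def)
next
  case False
  have "\<bar>norm (x + t *\<^sub>R y) - norm x\<bar> \<le> norm (x + t *\<^sub>R y - x)"
    by (rule norm_triangle_ineq3)
  also have "\<dots> = \<bar>t\<bar> * norm y" by simp
  finally show ?thesis
    using False unfolding norm_diffquot_def by (simp add: abs_divide divide_le_eq mult.commute)
qed

lemma norm_diffquot_left_le_right:
  fixes x y :: "'a::real_normed_vector"
  assumes r: "r > 0" and s: "s > 0"
  shows "norm_diffquot x y (-r) \<le> norm_diffquot x y s"
proof -
  have "(r + s) *\<^sub>R x = r *\<^sub>R (x + s *\<^sub>R y) + s *\<^sub>R (x - r *\<^sub>R y)"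
    by (simp add: algebra_simps)
  then have "norm ((r + s) *\<^sub>R x) \<le> r * norm (x + s *\<^sub>R y) + s * norm (x - r *\<^sub>R y)"
    using r s norm_triangle_ineq[of "r *\<^sub>R (x + s *\<^sub>R y)" "s *\<^sub>R (x - r *\<^sub>R y)"] by simp
  then have "(r + s) * norm x \<le> r * norm (x + s *\<^sub>R y) + s * norm (x - r *\<^sub>R y)"
    using r s by simp
  then show ?thesis
    unfolding norm_diffquot_def using r s by (simp add: field_simps)
qed

lemma norm_diffquot_le_norm_add_diff:
  assumes "0 < s" "s \<le> 1"
  shows "norm_diffquot x y s \<le> norm (x + y) - norm x"
proof -
  have "x + s *\<^sub>R y = (1 - s) *\<^sub>R x + s *\<^sub>R (x + y)"
    by (simp add: algebra_simps)
  then have "norm (x + s *\<^sub>R y) \<le> (1 - s) * norm x + s * norm (x + y)"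
    using assms norm_triangle_ineq[of "(1 - s) *\<^sub>R x" "s *\<^sub>R (x + y)"] by simp
  then have "norm (x + s *\<^sub>R y) - norm x \<le> s * (norm (x + y) - norm x)"
    by (simp add: algebra_simps)
  then show ?thesis
    unfolding norm_diffquot_def using assms by (simp add: divide_le_eq mult.commute)
qed

lemma modulus_of_smoothness_ge:
  fixes u w :: "'a::real_normed_vector"
  assumes "norm u = 1" "norm w = \<tau>"
  shows "(norm (u + w) + norm (u - w)) / 2 - 1 \<le> modulus_of_smoothness TYPE('a) \<tau>"
  unfolding modulus_of_smoothness_def
proof (rule cSUP_upper2[where x="(u, w)"])
  show "bdd_above ((\<lambda>p. (norm (fst p + snd p) + norm (fst p - snd p)) / 2 - 1) `
          {(x, y::'a). norm x = 1 \<and> norm y = \<tau>})"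
  proof (rule bdd_aboveI2[where M=\<tau>])
    fix p :: "'a \<times> 'a"
    assume "p \<in> {(x, y). norm x = 1 \<and> norm y = \<tau>}"
    then obtain a b where "p = (a, b)" "norm a = 1" "norm b = \<tau>" by auto
    then show "(norm (fst p + snd p) + norm (fst p - snd p)) / 2 - 1 \<le> \<tau>"
      using norm_triangle_ineq[of a b] norm_triangle_ineq4[of a b] by (simp add: field_simps)
  qed
qed (use assms in auto)

lemma norm_diffquot_gap_le_modulus:
  fixes x y :: "'a::real_normed_vector"
  assumes x: "x \<noteq> 0" and r: "r > 0"
  shows "norm_diffquot x y r - norm_diffquot x y (-r)
           \<le> 2 * norm x * modulus_of_smoothness TYPE('a) (r * norm y / norm x) / r"
proof -
  define n where "n = norm x"
  define u where "u = (1 / n) *\<^sub>R x"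
  define w where "w = (r / n) *\<^sub>R y"
  have n: "n > 0" using x by (simp add: n_def)
  have sum: "x + r *\<^sub>R y = n *\<^sub>R (u + w)" and diff: "x - r *\<^sub>R y = n *\<^sub>R (u - w)"
    using n by (simp_all add: u_def w_def algebra_simps)
  have "norm u = 1" "norm w = r * norm y / n"
    using n r by (simp_all add: u_def w_def n_def)
  then have "(norm (u + w) + norm (u - w)) / 2 - 1
               \<le> modulus_of_smoothness TYPE('a) (r * norm y / norm x)"
    using modulus_of_smoothness_ge[of u w] by (simp add: n_def)
  then have modulus: "norm (u + w) + norm (u - w) - 2
                        \<le> 2 * modulus_of_smoothness TYPE('a) (r * norm y / norm x)"
    by (simp add: field_simps)
  have "norm_diffquot x y r - norm_diffquot x y (-r)
          = (norm (x + r *\<^sub>R y) + norm (x - r *\<^sub>R y) - 2 * n) / r"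
    unfolding norm_diffquot_def n_def using r by (simp add: field_simps)
  also have "\<dots> = n * (norm (u + w) + norm (u - w) - 2) / r"
    unfolding sum diff norm_scaleR using n by (simp add: algebra_simps)
  also have "\<dots> \<le> n * (2 * modulus_of_smoothness TYPE('a) (r * norm y / norm x)) / r"
    using modulus n r by (intro divide_right_mono mult_left_mono) auto
  finally show ?thesis by (simp add: n_def mult.assoc mult.left_commute)
qed

lemma norm_diffquot_gap_tendsto_0:
  fixes x y :: "'a::real_normed_vector"
  assumes sm: "uniformly_smooth TYPE('a)" and x: "x \<noteq> 0"
  shows "((\<lambda>r. norm_diffquot x y r - norm_diffquot x y (-r)) \<longlongrightarrow> 0) (at_right 0)"
proof (cases "y = 0")
  case True
  then show ?thesis by (simp add: norm_diffquot_def)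
next
  case False
  define \<rho> where "\<rho> = modulus_of_smoothness TYPE('a)"
  define c where "c = norm y / norm x"
  have c: "c > 0" using False x by (simp add: c_def)
  have "filterlim (\<lambda>r. c * r) (at_right 0) (at_right (0::real))"
    unfolding filterlim_at
  proof
    show "\<forall>\<^sub>F r in at_right 0. c * r \<in> {0<..} \<and> c * r \<noteq> 0"
      unfolding eventually_at_right_field using c by (intro exI[of _ 1]) auto
    show "((\<lambda>r. c * r) \<longlongrightarrow> 0) (at_right 0)"
      by (rule tendsto_mult_right_zero) (rule tendsto_ident_at)
  qed
  moreover have "((\<lambda>t. \<rho> t / t) \<longlongrightarrow> 0) (at_right 0)"
    using sm unfolding uniformly_smooth_def \<rho>_def .
  ultimately have "((\<lambda>r. \<rho> (c * r) / (c * r)) \<longlongrightarrow> 0) (at_right 0)"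
    using filterlim_compose by fastforce
  from tendsto_mult_right_zero[OF this, of "2 * norm y"]
  have bound: "((\<lambda>r. 2 * norm y * (\<rho> (c * r) / (c * r))) \<longlongrightarrow> 0) (at_right 0)" .
  have upper: "norm_diffquot x y r - norm_diffquot x y (-r) \<le> 2 * norm y * (\<rho> (c * r) / (c * r))"
    if r: "r > 0" for r
  proof -
    have "2 * norm x * \<rho> (r * norm y / norm x) / r = 2 * norm y * (\<rho> (c * r) / (c * r))"
      using r x False by (simp add: c_def field_simps)
    then show ?thesis
      using norm_diffquot_gap_le_modulus[OF x r, of y] by (simp add: \<rho>_def)
  qed
  show ?thesis
  proof (rule tendsto_sandwich[OF _ _ tendsto_const bound])
    show "\<forall>\<^sub>F r in at_right 0. 0 \<le> norm_diffquot x y r - norm_diffquot x y (-r)"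
      unfolding eventually_at_right_field
      by (intro exI[of _ 1]) (auto simp: norm_diffquot_left_le_right)
    show "\<forall>\<^sub>F r in at_right 0.
            norm_diffquot x y r - norm_diffquot x y (-r) \<le> 2 * norm y * (\<rho> (c * r) / (c * r))"
      unfolding eventually_at_right_field using upper by (intro exI[of _ 1]) auto
  qed
qed

text \<open>Without this the \<open>Lim\<close> in the definition of \<open>sip\<close> would be an unspecified value.\<close>

lemma norm_diffquot_tendsto:
  fixes x y :: "'a::real_normed_vector"
  assumes sm: "uniformly_smooth TYPE('a)" and x: "x \<noteq> 0"
  shows "(norm_diffquot x y \<longlongrightarrow> Lim (at 0) (norm_diffquot x y)) (at (0::real))"
proof -
  define q where "q = norm_diffquot x y"
  define gap where "gap r = q r - q (-r)" for r
  define L where "L = Inf (q ` {0<..})"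
  have gap: "(gap \<longlongrightarrow> 0) (at_right 0)"
    unfolding gap_def q_def using norm_diffquot_gap_tendsto_0[OF sm x] .
  have "bdd_below (q ` {0<..})"
    by (rule bdd_belowI2[where m="q (-1)"]) (simp add: q_def norm_diffquot_left_le_right)
  then have L_le: "L \<le> q r" if "r > 0" for r
    unfolding L_def using that by (intro cInf_lower) auto
  have le_L: "q (-r) \<le> L" if "r > 0" for r
    unfolding L_def q_def using that by (intro cInf_greatest) (auto intro: norm_diffquot_left_le_right)
  have right: "(q \<longlongrightarrow> L) (at_right 0)"
  proof (rule tendsto_sandwich[OF _ _ tendsto_const])
    show "\<forall>\<^sub>F r in at_right 0. L \<le> q r"
      unfolding eventually_at_right_field using L_le by (intro exI[of _ 1]) auto
    show "\<forall>\<^sub>F r in at_right 0. q r \<le> L + gap r"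
      unfolding eventually_at_right_field using le_L by (intro exI[of _ 1]) (auto simp: gap_def)
    show "((\<lambda>r. L + gap r) \<longlongrightarrow> L) (at_right 0)"
      using tendsto_add[OF tendsto_const gap, of L] by simp
  qed
  have "((\<lambda>r. q (-r)) \<longlongrightarrow> L) (at_right 0)"
  proof (rule tendsto_sandwich[OF _ _ _ tendsto_const])
    show "\<forall>\<^sub>F r in at_right 0. L - gap r \<le> q (-r)"
      unfolding eventually_at_right_field using L_le by (intro exI[of _ 1]) (auto simp: gap_def)
    show "\<forall>\<^sub>F r in at_right 0. q (-r) \<le> L"
      unfolding eventually_at_right_field using le_L by (intro exI[of _ 1]) auto
    show "((\<lambda>r. L - gap r) \<longlongrightarrow> L) (at_right 0)"
      using tendsto_diff[OF tendsto_const gap, of L] by simp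
  qed
  then have "(q \<longlongrightarrow> L) (at 0)"
    using right by (simp add: filterlim_at_split filterlim_at_left_to_right)
  moreover from this have "Lim (at 0) q = L" by (intro tendsto_Lim) auto
  ultimately show ?thesis by (simp add: q_def)
qed

lemma sip_self: "sip x x = (norm x)\<^sup>2"
proof (cases "x = 0")
  case True
  then show ?thesis by (simp add: sip_def)
next
  case False
  have "\<forall>\<^sub>F t in at (0::real). norm_diffquot x x t = norm x"
    unfolding eventually_at
  proof (intro exI[of _ 1] conjI allI impI ballI)
    fix t :: real
    assume "t \<noteq> 0 \<and> dist t 0 < 1"
    then have t: "t \<noteq> 0" "\<bar>t\<bar> < 1" by auto
    have "norm (x + t *\<^sub>R x) = norm ((1 + t) *\<^sub>R x)" by (simp add: algebra_simps)
    also have "\<dots> = (1 + t) * norm x" using t by simp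
    finally show "norm_diffquot x x t = norm x"
      unfolding norm_diffquot_def using t by (simp add: field_simps)
  qed simp
  then have "Lim (at 0) (norm_diffquot x x) = norm x"
    by (intro tendsto_Lim tendsto_eventually) auto
  then show ?thesis using False by (simp add: sip_eq_Lim_norm_diffquot power2_eq_square)
qed

lemma abs_sip_le:
  fixes x y :: "'a::real_normed_vector"
  assumes "uniformly_smooth TYPE('a)"
  shows "\<bar>sip y x\<bar> \<le> norm y * norm x"
proof (cases "x = 0")
  case True
  then show ?thesis by (simp add: sip_def)
next
  case False
  have "\<bar>Lim (at 0) (norm_diffquot x y)\<bar> \<le> norm y"
    by (rule tendsto_le[OF _ tendsto_const tendsto_rabs[OF norm_diffquot_tendsto[OF assms False]]])
      (auto simp: abs_norm_diffquot_le)
  then show ?thesis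
    using False by (simp add: sip_eq_Lim_norm_diffquot abs_mult mult.commute mult_left_mono)
qed

lemma sip_le_norm_mult_norm_add_diff:
  fixes x y :: "'a::real_normed_vector"
  assumes "uniformly_smooth TYPE('a)"
  shows "sip y x \<le> norm x * (norm (x + y) - norm x)"
proof (cases "x = 0")
  case True
  then show ?thesis by (simp add: sip_def)
next
  case False
  have "(norm_diffquot x y \<longlongrightarrow> Lim (at 0) (norm_diffquot x y)) (at_right 0)"
    using norm_diffquot_tendsto[OF assms False] by (simp add: filterlim_at_split)
  moreover have "\<forall>\<^sub>F s in at_right 0. norm_diffquot x y s \<le> norm (x + y) - norm x"
    unfolding eventually_at_right_field
    by (intro exI[of _ 1]) (auto intro: norm_diffquot_le_norm_add_diff)
  ultimately have "Lim (at 0) (norm_diffquot x y) \<le> norm (x + y) - norm x"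
    by (rule tendsto_le[OF _ tendsto_const, rotated]) auto
  then show ?thesis
    using False by (simp add: sip_eq_Lim_norm_diffquot mult_left_mono)
qed

lemma uniformly_convex_eq_if_norm_add_eq:
  fixes u v :: "'a::real_normed_vector"
  assumes uc: "uniformly_convex TYPE('a)"
    and eq: "norm u = norm v" "norm (u + v) = 2 * norm u"
  shows "u = v"
proof (rule ccontr)
  assume ne: "u \<noteq> v"
  define r where "r = norm u"
  define u' where "u' = (1 / r) *\<^sub>R u"
  define v' where "v' = (1 / r) *\<^sub>R v"
  have r: "r > 0" using ne eq by (auto simp: r_def)
  have norms: "norm u' = 1" "norm v' = 1" using r eq by (auto simp: u'_def v'_def r_def)
  have "norm (u' - v') > 0" using ne r by (simp add: u'_def v'_def algebra_simps)
  with uc obtain \<delta> where "\<delta> > 0" and "\<And>x y::'a. norm x \<le> 1 \<and> norm y \<le> 1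
      \<and> norm (x - y) \<ge> norm (u' - v') \<Longrightarrow> norm ((1/2) *\<^sub>R (x + y)) \<le> 1 - \<delta>"
    unfolding uniformly_convex_def by blast
  with norms have "\<delta> > 0" "norm ((1/2) *\<^sub>R (u' + v')) \<le> 1 - \<delta>" by auto
  moreover have "(1/2) *\<^sub>R (u' + v') = (1 / (2 * r)) *\<^sub>R (u + v)"
    by (simp add: u'_def v'_def algebra_simps)
  then have "norm ((1/2) *\<^sub>R (u' + v')) = 1"
    using r eq by (simp add: r_def)
  ultimately show False by linarith
qed

lemma sip_eq_if_dual_in_span:
  assumes "dual_in_span m xs f0" "interpolates m xs ys f" "interpolates m xs ys g"
  shows "sip f f0 = sip g f0"
  using assms unfolding dual_in_span_def interpolates_def by auto

lemma norm_le_if_dual_in_span: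
  fixes f0 :: "'a::real_normed_vector"
  assumes sm: "uniformly_smooth TYPE('a)" and d: "dual_in_span m xs f0"
    and f0: "interpolates m xs ys f0" and f: "interpolates m xs ys f"
  shows "norm f0 \<le> norm f"
proof -
  have "norm f0 * norm f0 = sip f f0"
    using sip_eq_if_dual_in_span[OF d f f0] sip_self[of f0] by (simp add: power2_eq_square)
  also have "\<dots> \<le> norm f * norm f0" using abs_sip_le[OF sm, where x=f0 and y=f] by simp
  finally show ?thesis
    by (cases "norm f0 = 0") (auto simp: mult_le_cancel_right)
qed

lemma eq_if_dual_in_span_norm_eq:
  fixes f0 :: "'a::real_normed_vector"
  assumes uc: "uniformly_convex TYPE('a)" and sm: "uniformly_smooth TYPE('a)"
    and d: "dual_in_span m xs f0" and f0: "interpolates m xs ys f0"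
    and f1: "interpolates m xs ys f1" and eq: "norm f1 = norm f0"
  shows "f1 = f0"
proof -
  have "norm f0 * norm f0 = sip f1 f0"
    using sip_eq_if_dual_in_span[OF d f1 f0] sip_self[of f0] by (simp add: power2_eq_square)
  also have "\<dots> \<le> norm f0 * (norm (f0 + f1) - norm f0)"
    by (rule sip_le_norm_mult_norm_add_diff[OF sm])
  finally have sq: "norm f0 * norm f0 \<le> norm f0 * (norm (f0 + f1) - norm f0)" .
  show ?thesis
  proof (cases "f0 = 0")
    case True
    with eq show ?thesis by simp
  next
    case False
    with sq have "norm f0 \<le> norm (f0 + f1) - norm f0" by (simp add: mult_le_cancel_left_pos)
    then have "norm (f0 + f1) = 2 * norm f0"
      using norm_triangle_ineq[of f0 f1] eq by linarith
    with eq have "f0 = f1" using uniformly_convex_eq_if_norm_add_eq[OF uc, of f0 f1] by simp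
    then show ?thesis by simp
  qed
qed

theorem theorem4p1:
  fixes \<Omega> :: "'a::banach \<Rightarrow> real"
    and m :: nat and xs :: "nat \<Rightarrow> 'a" and ys :: "nat \<Rightarrow> real" and f0 :: 'a
  assumes "uniform_space TYPE('a)"
    and "admissible \<Omega>"
    and "m \<ge> 1"
    and "\<exists>f. interpolates m xs ys f"
    and "dual_in_span m xs f0"
  shows "is_interp_min \<Omega> m xs ys f0 \<longleftrightarrow> is_interp_min norm m xs ys f0"
proof -
  have uc: "uniformly_convex TYPE('a)" and sm: "uniformly_smooth TYPE('a)"
    using assms(1) unfolding uniform_space_def by auto
  show ?thesis
  proof
    assume "is_interp_min \<Omega> m xs ys f0"
    then show "is_interp_min norm m xs ys f0"
      using norm_le_if_dual_in_span[OF sm assms(5)] unfolding is_interp_min_def by blast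
  next
    assume min_norm: "is_interp_min norm m xs ys f0"
    obtain f1 where f1: "is_interp_min \<Omega> m xs ys f1" "dual_in_span m xs f1"
      using assms(2-4) unfolding admissible_def by blast
    have f0: "interpolates m xs ys f0" and f1_interp: "interpolates m xs ys f1"
      using min_norm f1(1) unfolding is_interp_min_def by auto
    have "norm f1 = norm f0"
      using min_norm f1_interp norm_le_if_dual_in_span[OF sm f1(2) f1_interp f0]
      unfolding is_interp_min_def by (simp add: order_antisym)
    then have "f0 = f1"
      using eq_if_dual_in_span_norm_eq[OF uc sm f1(2) f1_interp f0] by simp
    with f1(1) show "is_interp_min \<Omega> m xs ys f0" by simp
  qed
qed

end
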